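(* Let $L$ be a finite-dimensional Lie algebra over a field $F$ and let $M$ be a maximal subalgebra of $L$. Then the index complex $I(M)$ is non-empty; in fact, $I(M)$ contains an ideal of $L$.
   Context: For a nonzero subalgebra $B$ of $L$, the strict core $k(B)=k_L(B)$ is the sum of all ideals of $L$ that are proper subalgebras of $B$ (it is $0$ if there are none). A subalgebra $C$ of $L$ is a completion of the maximal subalgebra $M$ if $C\not\subseteq M$ but every proper subalgebra of $C$ that is an ideal of $L$ is contained in $M$ (equivalently, $C\not\subseteq M$ and $k(C)\subseteq M$). The index complex $I(M)$ is the set of all completions of $M$ in $L$. *)

theory Defs
  imports Complex_Main
begin

text \<open>A finite-dimensional Lie algebra over a field 'k: the whole type 'v is L,
  with scalar multiplication scale and Lie bracket br.\<close>

definition lie_algebra :: "('k::field \<Rightarrow> 'v::ab_group_add \<Rightarrow> 'v) \<Rightarrow> ('v \<Rightarrow> 'v \<Rightarrow> 'v) \<Rightarrow> bool" where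
  "lie_algebra scale br \<longleftrightarrow>
     vector_space scale \<and>
     (\<forall>x. Vector_Spaces.linear scale scale (br x)) \<and>
     (\<forall>y. Vector_Spaces.linear scale scale (\<lambda>x. br x y)) \<and>
     (\<forall>x. br x x = 0) \<and>
     (\<forall>x y z. br x (br y z) + br y (br z x) + br z (br x y) = 0)"

definition fin_dim :: "('k::field \<Rightarrow> 'v::ab_group_add \<Rightarrow> 'v) \<Rightarrow> bool" where
  "fin_dim scale \<longleftrightarrow> (\<exists>B. finite B \<and> module.span scale B = UNIV)"

definition lie_subalgebra :: "('k::field \<Rightarrow> 'v::ab_group_add \<Rightarrow> 'v) \<Rightarrow> ('v \<Rightarrow> 'v \<Rightarrow> 'v) \<Rightarrow> 'v set \<Rightarrow> bool" where
  "lie_subalgebra scale br S \<longleftrightarrow> module.subspace scale S \<and> (\<forall>x\<in>S. \<forall>y\<in>S. br x y \<in> S)"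

definition lie_ideal :: "('k::field \<Rightarrow> 'v::ab_group_add \<Rightarrow> 'v) \<Rightarrow> ('v \<Rightarrow> 'v \<Rightarrow> 'v) \<Rightarrow> 'v set \<Rightarrow> bool" where
  "lie_ideal scale br I \<longleftrightarrow> module.subspace scale I \<and> (\<forall>x. \<forall>y\<in>I. br x y \<in> I)"

definition maximal_subalgebra :: "('k::field \<Rightarrow> 'v::ab_group_add \<Rightarrow> 'v) \<Rightarrow> ('v \<Rightarrow> 'v \<Rightarrow> 'v) \<Rightarrow> 'v set \<Rightarrow> bool" where
  "maximal_subalgebra scale br M \<longleftrightarrow> lie_subalgebra scale br M \<and> M \<noteq> UNIV \<and>
     (\<forall>S. lie_subalgebra scale br S \<and> M \<subseteq> S \<longrightarrow> S = M \<or> S = UNIV)"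

definition completion :: "('k::field \<Rightarrow> 'v::ab_group_add \<Rightarrow> 'v) \<Rightarrow> ('v \<Rightarrow> 'v \<Rightarrow> 'v) \<Rightarrow> 'v set \<Rightarrow> 'v set \<Rightarrow> bool" where
  "completion scale br M C \<longleftrightarrow> lie_subalgebra scale br C \<and> \<not> C \<subseteq> M \<and>
     (\<forall>D. lie_subalgebra scale br D \<and> D \<subset> C \<and> lie_ideal scale br D \<longrightarrow> D \<subseteq> M)"

definition index_complex :: "('k::field \<Rightarrow> 'v::ab_group_add \<Rightarrow> 'v) \<Rightarrow> ('v \<Rightarrow> 'v \<Rightarrow> 'v) \<Rightarrow> 'v set \<Rightarrow> 'v set set" where
  "index_complex scale br M = {C. completion scale br M C}"

end

theory Submission
  imports Defs
begin

text \<open>Among the ideals of L not contained in M (there is one, L itself, since M is proper),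
  take one of least dimension. Every ideal strictly inside it has smaller dimension, so it
  lies in M: the chosen ideal is a completion of M.\<close>

lemma (in vector_space) finite_spanning_set_imp_finite_dimensional:
  assumes "finite B0" and "span B0 = UNIV"
  shows "\<exists>B. finite_dimensional_vector_space scale B"
proof -
  obtain B where "B \<subseteq> B0" "independent B" "B0 \<subseteq> span B"
    using maximal_independent_subset by blast
  moreover from this have "span B = UNIV"
    using assms(2) by (metis span_mono span_span top.extremum_uniqueI)
  ultimately have "finite_dimensional_vector_space scale B"
    using assms(1) finite_subset by unfold_locales blast+
  then show ?thesis ..
qed

lemma (in finite_dimensional_vector_space) ex_subspace_minimal:
  assumes "\<forall>S\<in>\<F>. subspace S" and "T \<in> \<F>"
  shows "\<exists>S\<in>\<F>. \<forall>S'\<in>\<F>. \<not> S' \<subset> S"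
proof -
  obtain S where S: "S \<in> \<F>" and least: "\<And>S'. S' \<in> \<F> \<Longrightarrow> dim S \<le> dim S'"
    using ex_has_least_nat[of "\<lambda>S. S \<in> \<F>" T dim] assms(2) by blast
  have "\<not> S' \<subset> S" if "S' \<in> \<F>" for S'
  proof
    assume "S' \<subset> S"
    then have "dim S' < dim S"
      using dim_psubset assms(1) S that by (metis span_eq_iff)
    with least[OF that] show False by simp
  qed
  with S show ?thesis by blast
qed

lemma lie_ideal_imp_lie_subalgebra:
  "lie_ideal scale br I \<Longrightarrow> lie_subalgebra scale br I"
  by (simp add: lie_ideal_def lie_subalgebra_def)

lemma lie_ideal_UNIV:
  assumes "vector_space scale"
  shows "lie_ideal scale br UNIV"
proof -
  interpret vector_space scale by (fact assms)
  show ?thesis by (simp add: lie_ideal_def)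
qed

lemma minimal_lie_ideal_not_in_imp_completion:
  assumes "lie_ideal scale br C" and "\<not> C \<subseteq> M"
    and "\<forall>D. lie_ideal scale br D \<and> \<not> D \<subseteq> M \<longrightarrow> \<not> D \<subset> C"
  shows "completion scale br M C"
  using assms by (auto simp: completion_def lie_ideal_imp_lie_subalgebra)

theorem lemma1p1:
  fixes scale :: "'k::field \<Rightarrow> 'v::ab_group_add \<Rightarrow> 'v"
    and br :: "'v \<Rightarrow> 'v \<Rightarrow> 'v"
    and M :: "'v set"
  assumes "lie_algebra scale br"
    and "fin_dim scale"
    and "maximal_subalgebra scale br M"
  shows "index_complex scale br M \<noteq> {} \<and> (\<exists>C\<in>index_complex scale br M. lie_ideal scale br C)"
proof -
  have vs: "vector_space scale"
    using assms(1) by (simp add: lie_algebra_def)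
  then obtain B where fd: "finite_dimensional_vector_space scale B"
    using assms(2) vector_space.finite_spanning_set_imp_finite_dimensional
    unfolding fin_dim_def by blast
  define \<F> where "\<F> = {C. lie_ideal scale br C \<and> \<not> C \<subseteq> M}"
  have "UNIV \<in> \<F>"
    using assms(3) lie_ideal_UNIV[OF vs] by (auto simp: \<F>_def maximal_subalgebra_def)
  moreover have "\<forall>S\<in>\<F>. module.subspace scale S"
    by (simp add: \<F>_def lie_ideal_def)
  ultimately obtain C where "C \<in> \<F>" and "\<forall>D\<in>\<F>. \<not> D \<subset> C"
    using finite_dimensional_vector_space.ex_subspace_minimal[OF fd] by blast
  then have "completion scale br M C" and "lie_ideal scale br C"
    by (auto simp: \<F>_def intro: minimal_lie_ideal_not_in_imp_completion)
  then show ?thesis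
    by (auto simp: index_complex_def)
qed

end
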